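(* Let $s\ge1$ and $T\in\mathcal{T}(s)$. Then the tableau $D_{2,s}(T)$ satisfies conditions (C1)--(C5); i.e. $D_{2,s}(T)\in B(k\varpi_2)$ for some $0\le k\le s$.
   Context: Let $n\ge4$. Alphabet: $1<2<\dots<n-1<\{n,\bar n\}<\overline{n-1}<\dots<\bar2<\bar1$, a partial order in which $n$ and $\bar n$ are incomparable; set $\bar{\bar i}=i$. A tableau of shape $(k,k)$ is a sequence of $k$ columns, column $j$ with top entry $a_j$ and bottom entry $b_j$, written $\binom{a_1}{b_1}\cdots\binom{a_k}{b_k}$ ($\binom{x}{y}$ denotes a column, not a binomial coefficient). Conditions: (C1) $a_j\le a_{j+1}$ and $b_j\le b_{j+1}$ for all $j$; (C2) $b_j\not\le a_j$; (C3) no $j$ and letter $x$ with $a_j=a_{j+1}=x$, $b_{j+1}=\bar x$, and no $j,x$ with $a_j=x$, $b_j=b_{j+1}=\bar x$; (C4) no $j<j'$ with columns $j,j'$ equal to $\binom{n-1}{n},\binom{n}{\overline{n-1}}$ respectively, nor to $\binom{n-1}{\bar n},\binom{\bar n}{\overline{n-1}}$; (C5) no column $\binom{1}{\bar1}$. $B(k\varpi_2)$ = tableaux of shape $(k,k)$ satisfying (C1)--(C5) ($B(0)$ consists of the empty tableau); $\mathcal{T}(s)$ = tableaux of shape $(s,s)$ satisfying (C1),(C2),(C4). For $T\in\mathcal{T}(s)\setminus B(s\varpi_2)$ not equal to $\binom{1}{\bar1}\cdots\binom{1}{\bar1}$, there are a unique letter $a\in\{1,\dots,n,\bar n\}$ and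 $m\ge1$ such that $T$ contains consecutive columns of one of the forms (i) $\binom{a}{b_1}\binom{a}{\bar a}^m\binom{c_1}{d_1}$ with $b_1\ne\bar a$ and ($c_1\ne a$ or $d_1\ne\bar a$); (ii) $\binom{b_2}{c_2}\binom{a}{\bar a}^m\binom{d_2}{\bar a}$ with $d_2\neq a$ and ($b_2\ne a$ or $c_2\ne\bar a$); (iii) $\binom{b_3}{c_3}\binom{a}{\bar a}^{m+1}\binom{d_3}{e_3}$ with $b_3\ne a$, $e_3\ne\bar a$ (bounding columns may be absent at the ends of $T$); here $\binom{a}{\bar a}^m$ means $m$ consecutive columns $\binom{a}{\bar a}$. The drop map $D_{2,s}$ is: $D_{2,s}(\binom{1}{\bar1}\cdots\binom{1}{\bar1})$ is the empty tableau; $D_{2,s}(T)=T$ if $T\in B(s\varpi_2)$; otherwise $D_{2,s}(T)$ is obtained from $T$ by deleting $m$ of the columns $\binom{a}{\bar a}$ of this configuration (all $m$ in cases (i),(ii); $m$ of the $m+1$ in case (iii)). *)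

theory Defs
  imports Main
begin

text \<open>Letters of the alphabet for type D_n: Unb i stands for i, Bar i for i-bar,
  with 1 \<le> i \<le> n.\<close>
datatype letter = Unb nat | Bar nat

definition valid_letter :: "nat \<Rightarrow> letter \<Rightarrow> bool" where
  "valid_letter n x = (case x of Unb i \<Rightarrow> 1 \<le> i \<and> i \<le> n | Bar i \<Rightarrow> 1 \<le> i \<and> i \<le> n)"

fun bar :: "letter \<Rightarrow> letter" where
  "bar (Unb i) = Bar i"
| "bar (Bar i) = Unb i"

text \<open>Position of a letter in 1 < 2 < ... < n-1 < {n, n-bar} < (n-1)-bar < ... < 1-bar.\<close>
fun rank :: "nat \<Rightarrow> letter \<Rightarrow> nat" where
  "rank n (Unb i) = i"
| "rank n (Bar i) = 2 * n + 1 - i"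

definition leq :: "nat \<Rightarrow> letter \<Rightarrow> letter \<Rightarrow> bool" where
  "leq n x y = (x = y \<or> (rank n x < rank n y \<and> \<not> (x = Unb n \<and> y = Bar n)
                                         \<and> \<not> (x = Bar n \<and> y = Unb n)))"

text \<open>A column is (top, bottom); a tableau of shape (k,k) is the list of its k columns.\<close>
type_synonym column = "letter \<times> letter"
type_synonym tableau = "column list"

definition letters_ok :: "nat \<Rightarrow> tableau \<Rightarrow> bool" where
  "letters_ok n T = (\<forall>c\<in>set T. valid_letter n (fst c) \<and> valid_letter n (snd c))"

definition C1 :: "nat \<Rightarrow> tableau \<Rightarrow> bool" where
  "C1 n T = (\<forall>j. Suc j < length T \<longrightarrow>
      leq n (fst (T ! j)) (fst (T ! Suc j)) \<and> leq n (snd (T ! j)) (snd (T ! Suc j)))"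

definition C2 :: "nat \<Rightarrow> tableau \<Rightarrow> bool" where
  "C2 n T = (\<forall>j < length T. \<not> leq n (snd (T ! j)) (fst (T ! j)))"

definition C3 :: "tableau \<Rightarrow> bool" where
  "C3 T = ((\<not> (\<exists>j x. Suc j < length T \<and> fst (T ! j) = x \<and> fst (T ! Suc j) = x
                        \<and> snd (T ! Suc j) = bar x))
         \<and> (\<not> (\<exists>j x. Suc j < length T \<and> fst (T ! j) = x \<and> snd (T ! j) = bar x
                        \<and> snd (T ! Suc j) = bar x)))"

definition C4 :: "nat \<Rightarrow> tableau \<Rightarrow> bool" where
  "C4 n T = (\<not> (\<exists>j j'. j < j' \<and> j' < length T \<and>
        ((T ! j = (Unb (n - 1), Unb n) \<and> T ! j' = (Unb n, Bar (n - 1))) \<or>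
         (T ! j = (Unb (n - 1), Bar n) \<and> T ! j' = (Bar n, Bar (n - 1))))))"

definition C5 :: "tableau \<Rightarrow> bool" where
  "C5 T = ((Unb 1, Bar 1) \<notin> set T)"

definition inB :: "nat \<Rightarrow> nat \<Rightarrow> tableau \<Rightarrow> bool" where
  "inB n k T = (length T = k \<and> letters_ok n T \<and> C1 n T \<and> C2 n T \<and> C3 T \<and> C4 n T \<and> C5 T)"

definition inTab :: "nat \<Rightarrow> nat \<Rightarrow> tableau \<Rightarrow> bool" where
  "inTab n s T = (length T = s \<and> letters_ok n T \<and> C1 n T \<and> C2 n T \<and> C4 n T)"

text \<open>One drop step: T' arises from T by deleting m columns (a, a-bar) of a configuration
  of type (i), (ii) or (iii).\<close>
definition drop_step :: "nat \<Rightarrow> tableau \<Rightarrow> tableau \<Rightarrow> bool" where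
  "drop_step n T T' = (\<exists>a m P Q. (a \<in> Unb ` {1..n} \<or> a = Bar n) \<and> m \<ge> 1 \<and>
     ((\<exists>b1. T = P @ [(a, b1)] @ replicate m (a, bar a) @ Q \<and> b1 \<noteq> bar a \<and>
            (Q = [] \<or> hd Q \<noteq> (a, bar a)) \<and> T' = P @ [(a, b1)] @ Q)
    \<or> (\<exists>d2. T = P @ replicate m (a, bar a) @ [(d2, bar a)] @ Q \<and> d2 \<noteq> a \<and>
            (P = [] \<or> last P \<noteq> (a, bar a)) \<and> T' = P @ [(d2, bar a)] @ Q)
    \<or> (T = P @ replicate (m + 1) (a, bar a) @ Q \<and>
            (P = [] \<or> fst (last P) \<noteq> a) \<and> (Q = [] \<or> snd (hd Q) \<noteq> bar a) \<and>
            T' = P @ replicate 1 (a, bar a) @ Q)))"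

definition drop_map :: "nat \<Rightarrow> nat \<Rightarrow> tableau \<Rightarrow> tableau" where
  "drop_map n s T =
     (if T = replicate s (Unb 1, Bar 1) then []
      else if inB n s T then T
      else (THE T'. drop_step n T T'))"

end

theory Submission
  imports Defs "HOL-Library.Sublist"
begin

(* A tableau T of \<T>(s) outside B(s\<varpi>_2) violates (C3) or (C5), so it contains a diagonal
   column (a, a-bar). By (C1) the columns of T form a chain for the componentwise order, and two
   diagonal columns are comparable only if they are equal; hence all diagonal columns of T
   coincide and form a single block P (a, a-bar)^k Q. Whatever configuration the drop map
   matches, it deletes this block completely if a neighbour would violate (C3) together with
   (a, a-bar), and down to one column otherwise. So drop_step is functional, the THE in drop_map
   is well defined, and its value is a subsequence of T: (C1), (C2), (C4) are inherited,
   (C3) holds by the choice of how many columns survive, and (C5) fails only for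
   T = (1, 1-bar)^s. *)

lemma sorted_wrt_subseq: "subseq xs ys \<Longrightarrow> sorted_wrt R ys \<Longrightarrow> sorted_wrt R xs"
  by (induction rule: list_emb.induct) (auto dest: list_emb_set)

lemma sorted_wrt_comparable:
  assumes "sorted_wrt R xs" "x \<in> set xs" "y \<in> set xs"
  shows "x = y \<or> R x y \<or> R y x"
  using assms by (induction xs) auto

lemma sorted_wrt_antisym_block:
  assumes antisym: "\<And>u v. R u v \<Longrightarrow> R v u \<Longrightarrow> u = v"
    and "sorted_wrt R xs" "x \<in> set xs"
  shows "\<exists>P k Q. xs = P @ replicate k x @ Q \<and> 1 \<le> k \<and> x \<notin> set P \<and> x \<notin> set Q"
  using assms(2,3)
proof (induction xs)
  case Nil
  then show ?case by simp
next
  case (Cons y ys)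
  show ?case
  proof (cases "y = x")
    case yx: True
    show ?thesis
    proof (cases "x \<in> set ys")
      case True
      then obtain P k Q where ys: "ys = P @ replicate k x @ Q" "1 \<le> k" "x \<notin> set P" "x \<notin> set Q"
        using Cons by auto
      have "P = []"
      proof (cases P)
        case (Cons p P')
        then have "R x p" "R p x"
          using Cons.prems(1) yx ys(1,2) by (auto simp: sorted_wrt_append)
        then show ?thesis using antisym ys(3) Cons by auto
      qed
      then have "y # ys = [] @ replicate (Suc k) x @ Q" using yx ys(1) by simp
      then show ?thesis using ys(4) by (metis empty_iff empty_set le_add1 plus_1_eq_Suc)
    next
      case False
      then have "y # ys = [] @ replicate 1 x @ ys" using yx by simp
      then show ?thesis using False by (metis empty_iff empty_set order_refl)
    qed
  next
    case False
    then obtain P k Q where ys: "ys = P @ replicate k x @ Q" "1 \<le> k" "x \<notin> set P" "x \<notin> set Q"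
      using Cons by auto
    then have "y # ys = (y # P) @ replicate k x @ Q" by simp
    then show ?thesis using ys False by (metis set_ConsD)
  qed
qed

lemma sorted_wrt_antisym_maximal_block:
  assumes antisym: "\<And>u v. R u v \<Longrightarrow> R v u \<Longrightarrow> u = v"
    and sorted: "sorted_wrt R (P @ replicate k x @ Q)" and "1 \<le> k"
    and "P = [] \<or> last P \<noteq> x" and "Q = [] \<or> hd Q \<noteq> x"
  shows "x \<notin> set P \<and> x \<notin> set Q"
proof (intro conjI notI)
  assume "x \<in> set P"
  then obtain P' p where "P = P' @ [p]" and "p \<noteq> x" "x \<in> set P'"
    using assms(4) by (cases P rule: rev_exhaust) auto
  then have "R x p" "R p x"
    using sorted \<open>1 \<le> k\<close> by (auto simp: sorted_wrt_append)
  then show False using antisym \<open>p \<noteq> x\<close> by blast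
next
  assume "x \<in> set Q"
  then obtain q Q' where "Q = q # Q'" and "q \<noteq> x" "x \<in> set Q'"
    using assms(5) by (cases Q) auto
  then have "R x q" "R q x"
    using sorted \<open>1 \<le> k\<close> by (auto simp: sorted_wrt_append)
  then show False using antisym \<open>q \<noteq> x\<close> by blast
qed

lemma block_decomposition_unique:
  assumes "P @ replicate k x @ Q = P' @ replicate k' x @ Q'" "1 \<le> k" "1 \<le> k'"
    and "x \<notin> set P" "x \<notin> set Q" "x \<notin> set P'" "x \<notin> set Q'"
  shows "P = P' \<and> Q = Q'"
proof -
  have split: "takeWhile (\<lambda>c. c \<noteq> x) (A @ replicate m x @ B) = A \<and>
      dropWhile (\<lambda>c. c = x) (dropWhile (\<lambda>c. c \<noteq> x) (A @ replicate m x @ B)) = B"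
    if "1 \<le> m" "x \<notin> set A" "x \<notin> set B" for A B m
  proof -
    have "dropWhile (\<lambda>c. c = x) B = B" using \<open>x \<notin> set B\<close> by (cases B) auto
    then show ?thesis using that by (cases m) (simp_all add: takeWhile_append dropWhile_append)
  qed
  show ?thesis using split[of k P Q] split[of k' P' Q'] assms by simp
qed

lemma leq_trans: "leq n x y \<Longrightarrow> leq n y z \<Longrightarrow> leq n x z"
  unfolding leq_def by (cases x; cases y; cases z) auto

lemma leq_antisym: "leq n x y \<Longrightarrow> leq n y x \<Longrightarrow> x = y"
  unfolding leq_def by auto

definition col_le :: "nat \<Rightarrow> column \<Rightarrow> column \<Rightarrow> bool" where
  "col_le n c d \<longleftrightarrow> leq n (fst c) (fst d) \<and> leq n (snd c) (snd d)"

lemma transp_col_le: "transp (col_le n)"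
  unfolding transp_def col_le_def using leq_trans by blast

lemma col_le_antisym: "col_le n c d \<Longrightarrow> col_le n d c \<Longrightarrow> c = d"
  unfolding col_le_def using leq_antisym by (metis prod.expand)

definition diag :: "column \<Rightarrow> bool" where
  "diag c \<longleftrightarrow> snd c = bar (fst c)"

definition C3_pair :: "column \<Rightarrow> column \<Rightarrow> bool" where
  "C3_pair c d \<longleftrightarrow> \<not> (diag d \<and> fst d = fst c) \<and> \<not> (diag c \<and> snd d = snd c)"

definition C4_pair :: "nat \<Rightarrow> column \<Rightarrow> column \<Rightarrow> bool" where
  "C4_pair n c d \<longleftrightarrow>
     \<not> (c = (Unb (n - 1), Unb n) \<and> d = (Unb n, Bar (n - 1))) \<and>
     \<not> (c = (Unb (n - 1), Bar n) \<and> d = (Bar n, Bar (n - 1)))"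

lemma C1_iff_sorted_wrt: "C1 n T \<longleftrightarrow> sorted_wrt (col_le n) T"
  by (simp add: C1_def successively_conv_sorted_wrt[OF transp_col_le, symmetric]
      successively_conv_nth col_le_def)

lemma C2_iff: "C2 n T \<longleftrightarrow> (\<forall>c\<in>set T. \<not> leq n (snd c) (fst c))"
  unfolding C2_def by (simp add: all_set_conv_all_nth)

lemma C3_iff_successively: "C3 T \<longleftrightarrow> successively C3_pair T"
  unfolding C3_def successively_conv_nth C3_pair_def diag_def by auto

lemma C4_iff_sorted_wrt: "C4 n T \<longleftrightarrow> sorted_wrt (C4_pair n) T"
  unfolding C4_def sorted_wrt_iff_nth_less C4_pair_def by blast

lemma C3_if_no_diag: "\<forall>c\<in>set T. \<not> diag c \<Longrightarrow> C3 T"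
  unfolding C3_iff_successively
  by (induction T rule: induct_list012) (auto simp: C3_pair_def)

lemma C5_if_no_diag: "\<forall>c\<in>set T. \<not> diag c \<Longrightarrow> C5 T"
  unfolding C5_def diag_def by force

lemma diag_col_le_eq:
  assumes "valid_letter n x" "valid_letter n y" "col_le n (x, bar x) (y, bar y)"
  shows "x = y"
  using assms unfolding valid_letter_def col_le_def leq_def by (cases x; cases y) auto

lemma diag_column_unique:
  assumes "sorted_wrt (col_le n) T" "letters_ok n T" "c \<in> set T" "d \<in> set T" "diag c" "diag d"
  shows "c = d"
proof -
  obtain x y where c: "c = (x, bar x)" and d: "d = (y, bar y)"
    using assms(5,6) unfolding diag_def by (metis prod.collapse)
  have "valid_letter n x" "valid_letter n y"
    using assms(2-4) unfolding letters_ok_def c d by auto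
  then show ?thesis
    using sorted_wrt_comparable[OF assms(1,3,4)] diag_col_le_eq unfolding c d by metis
qed

lemma diag_letter_valid:
  assumes "valid_letter n a" "\<not> leq n (bar a) a"
  shows "a \<in> Unb ` {1..n} \<or> a = Bar n"
  using assms unfolding valid_letter_def leq_def by (cases a) auto

definition diag_block_decomp :: "tableau \<Rightarrow> tableau \<Rightarrow> letter \<Rightarrow> nat \<Rightarrow> tableau \<Rightarrow> bool" where
  "diag_block_decomp T P a k Q \<longleftrightarrow>
     T = P @ replicate k (a, bar a) @ Q \<and> 1 \<le> k \<and> (a, bar a) \<notin> set P \<and> (a, bar a) \<notin> set Q"

lemma diag_block_decomp_in_set:
  "diag_block_decomp T P a k Q \<Longrightarrow> (a, bar a) \<in> set T"
  unfolding diag_block_decomp_def by (cases k) auto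

lemma diag_block_decomp_exists:
  assumes tab: "inTab n s T" and not_B: "\<not> inB n s T"
  obtains P a k Q where "diag_block_decomp T P a k Q"
proof -
  have "\<not> C3 T \<or> \<not> C5 T" using tab not_B unfolding inTab_def inB_def by blast
  then obtain a where "(a, bar a) \<in> set T"
    using C3_if_no_diag C5_if_no_diag unfolding diag_def by (metis prod.collapse)
  moreover have "sorted_wrt (col_le n) T" using tab unfolding inTab_def C1_iff_sorted_wrt by simp
  ultimately obtain P k Q where "T = P @ replicate k (a, bar a) @ Q" "1 \<le> k"
      "(a, bar a) \<notin> set P" "(a, bar a) \<notin> set Q"
    using sorted_wrt_antisym_block[of "col_le n"] col_le_antisym by blast
  then show ?thesis using that unfolding diag_block_decomp_def by blast
qed

lemma inTab_no_diag_outside_block: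
  assumes "inTab n s T" "diag_block_decomp T P a k Q"
  shows "\<forall>c\<in>set P \<union> set Q. \<not> diag c"
proof -
  have "(a, bar a) \<in> set T" "diag (a, bar a)" "set P \<union> set Q \<subseteq> set T"
    using assms(2) unfolding diag_block_decomp_def diag_def by auto
  then show ?thesis
    using assms diag_column_unique[of n T] unfolding inTab_def C1_iff_sorted_wrt diag_block_decomp_def
    by blast
qed

(* Keeping one column (a, a-bar) between P and Q violates (C3) exactly when this holds; these are
   the configurations (i) and (ii) of the drop map, in which the whole block is deleted. *)
definition C3_clash :: "letter \<Rightarrow> tableau \<Rightarrow> tableau \<Rightarrow> bool" where
  "C3_clash a P Q \<longleftrightarrow> (P \<noteq> [] \<and> fst (last P) = a) \<or> (Q \<noteq> [] \<and> snd (hd Q) = bar a)"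

definition drop_block :: "letter \<Rightarrow> tableau \<Rightarrow> tableau \<Rightarrow> tableau" where
  "drop_block a P Q = (if C3_clash a P Q then P @ Q else P @ [(a, bar a)] @ Q)"

lemma subseq_drop_block:
  "diag_block_decomp T P a k Q \<Longrightarrow> subseq (drop_block a P Q) T"
  unfolding diag_block_decomp_def drop_block_def
  by (cases k) (auto simp: subseq_append')

lemma C3_drop_block:
  assumes "\<forall>c\<in>set P \<union> set Q. \<not> diag c"
  shows "C3 (drop_block a P Q)"
proof (cases "C3_clash a P Q")
  case True
  then show ?thesis using assms C3_if_no_diag unfolding drop_block_def by auto
next
  case False
  have "successively C3_pair P" "successively C3_pair Q"
    using assms C3_if_no_diag unfolding C3_iff_successively by auto
  moreover have "P = [] \<or> C3_pair (last P) (a, bar a)" "Q = [] \<or> C3_pair (a, bar a) (hd Q)"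
    using assms False unfolding C3_clash_def C3_pair_def diag_def by auto
  ultimately show ?thesis
    using False unfolding drop_block_def C3_iff_successively
    by (cases Q) (auto simp: successively_append_iff)
qed

lemma not_C5_drop_block:
  assumes tab: "inTab n s T" and decomp: "diag_block_decomp T P a k Q"
    and not_C5: "\<not> C5 (drop_block a P Q)"
  shows "T = replicate k (Unb 1, Bar 1)"
proof -
  have no_diag: "\<forall>c\<in>set P \<union> set Q. \<not> diag c"
    using inTab_no_diag_outside_block[OF tab decomp] .
  have "(Unb 1, Bar 1) \<in> set (drop_block a P Q)" using not_C5 unfolding C5_def by simp
  then have a: "a = Unb 1" and no_clash: "\<not> C3_clash a P Q"
    using no_diag unfolding drop_block_def diag_def by (force split: if_splits)+
  have sorted: "sorted_wrt (col_le n) T"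
    and letters: "\<forall>c\<in>set T. valid_letter n (fst c) \<and> valid_letter n (snd c)"
    using tab unfolding inTab_def C1_iff_sorted_wrt letters_ok_def by auto
  have "P = []"
  proof (rule ccontr)
    assume "P \<noteq> []"
    then have "col_le n (last P) (a, bar a)" "valid_letter n (fst (last P))"
      using sorted letters decomp unfolding diag_block_decomp_def
      by (auto simp: sorted_wrt_append Suc_le_eq)
    then have "fst (last P) = a"
      unfolding a col_le_def leq_def valid_letter_def by (cases "fst (last P)") auto
    then show False using no_clash \<open>P \<noteq> []\<close> unfolding C3_clash_def by simp
  qed
  moreover have "Q = []"
  proof (rule ccontr)
    assume "Q \<noteq> []"
    then have "col_le n (a, bar a) (hd Q)" "valid_letter n (snd (hd Q))"
      using sorted letters decomp unfolding diag_block_decomp_def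
      by (auto simp: sorted_wrt_append Suc_le_eq)
    then have "snd (hd Q) = bar a"
      unfolding a col_le_def leq_def valid_letter_def by (cases "snd (hd Q)") auto
    then show False using no_clash \<open>Q \<noteq> []\<close> unfolding C3_clash_def by simp
  qed
  ultimately show ?thesis using decomp a unfolding diag_block_decomp_def by simp
qed

lemma inB_drop_block:
  assumes tab: "inTab n s T" and decomp: "diag_block_decomp T P a k Q"
    and not_all_1: "T \<noteq> replicate s (Unb 1, Bar 1)"
  shows "\<exists>k\<le>s. inB n k (drop_block a P Q)"
proof -
  let ?T' = "drop_block a P Q"
  have sub: "subseq ?T' T" using subseq_drop_block[OF decomp] .
  have "length ?T' \<le> s" using tab list_emb_length[OF sub] unfolding inTab_def by simp
  moreover have "letters_ok n ?T'" "C2 n ?T'"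
    using tab list_emb_set[OF sub] unfolding inTab_def letters_ok_def C2_iff by blast+
  moreover have "C1 n ?T'" "C4 n ?T'"
    using tab sorted_wrt_subseq[OF sub] unfolding inTab_def C1_iff_sorted_wrt C4_iff_sorted_wrt
    by blast+
  moreover have "C3 ?T'"
    using C3_drop_block inTab_no_diag_outside_block[OF tab decomp] by blast
  moreover have "C5 ?T'"
    using not_C5_drop_block[OF tab decomp] tab not_all_1 unfolding inTab_def by force
  ultimately show ?thesis unfolding inB_def by blast
qed

lemma drop_step_imp_drop_block:
  assumes sorted: "sorted_wrt (col_le n) T" and step: "drop_step n T T'"
  shows "\<exists>a P k Q. diag_block_decomp T P a k Q \<and> T' = drop_block a P Q"
proof -
  have maximal: "diag_block_decomp T P a k Q"
    if "T = P @ replicate k (a, bar a) @ Q" "1 \<le> k"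
      "P = [] \<or> last P \<noteq> (a, bar a)" "Q = [] \<or> hd Q \<noteq> (a, bar a)" for P a k Q
    using that sorted_wrt_antisym_maximal_block[of "col_le n" P k "(a, bar a)" Q] col_le_antisym sorted
    unfolding diag_block_decomp_def by blast
  obtain a m P Q where "1 \<le> m" and
    "(\<exists>b1. T = P @ [(a, b1)] @ replicate m (a, bar a) @ Q \<and> b1 \<noteq> bar a \<and>
        (Q = [] \<or> hd Q \<noteq> (a, bar a)) \<and> T' = P @ [(a, b1)] @ Q)
     \<or> (\<exists>d2. T = P @ replicate m (a, bar a) @ [(d2, bar a)] @ Q \<and> d2 \<noteq> a \<and>
        (P = [] \<or> last P \<noteq> (a, bar a)) \<and> T' = P @ [(d2, bar a)] @ Q)
     \<or> (T = P @ replicate (m + 1) (a, bar a) @ Q \<and>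
        (P = [] \<or> fst (last P) \<noteq> a) \<and> (Q = [] \<or> snd (hd Q) \<noteq> bar a) \<and>
        T' = P @ replicate 1 (a, bar a) @ Q)"
    using step unfolding drop_step_def by blast
  then consider
      (i) b1 where "T = (P @ [(a, b1)]) @ replicate m (a, bar a) @ Q" "b1 \<noteq> bar a"
        "Q = [] \<or> hd Q \<noteq> (a, bar a)" "T' = drop_block a (P @ [(a, b1)]) Q"
    | (ii) d2 where "T = P @ replicate m (a, bar a) @ ((d2, bar a) # Q)" "d2 \<noteq> a"
        "P = [] \<or> last P \<noteq> (a, bar a)" "T' = drop_block a P ((d2, bar a) # Q)"
    | (iii) "T = P @ replicate (m + 1) (a, bar a) @ Q"
        "P = [] \<or> last P \<noteq> (a, bar a)" "Q = [] \<or> hd Q \<noteq> (a, bar a)" "T' = drop_block a P Q"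
    unfolding drop_block_def C3_clash_def by fastforce
  then show ?thesis
  proof cases
    case i
    then show ?thesis using maximal[of "P @ [(a, b1)]" m a Q] \<open>1 \<le> m\<close> by auto
  next
    case ii
    then show ?thesis using maximal[of P m a "(d2, bar a) # Q"] \<open>1 \<le> m\<close> by auto
  next
    case iii
    then show ?thesis using maximal[of P "m + 1" a Q] by auto
  qed
qed

lemma drop_step_unique:
  assumes tab: "inTab n s T" and "drop_step n T T1" "drop_step n T T2"
  shows "T1 = T2"
proof -
  have sorted: "sorted_wrt (col_le n) T" and letters: "letters_ok n T"
    using tab unfolding inTab_def C1_iff_sorted_wrt by simp_all
  obtain a P k Q where 1: "diag_block_decomp T P a k Q" "T1 = drop_block a P Q"
    using drop_step_imp_drop_block[OF sorted assms(2)] by blast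
  obtain a' P' k' Q' where 2: "diag_block_decomp T P' a' k' Q'" "T2 = drop_block a' P' Q'"
    using drop_step_imp_drop_block[OF sorted assms(3)] by blast
  have "(a, bar a) = (a', bar a')"
    by (rule diag_column_unique[OF sorted letters])
      (use diag_block_decomp_in_set 1(1) 2(1) in \<open>auto simp: diag_def\<close>)
  then have "a' = a" by simp
  then have "P = P' \<and> Q = Q'"
    using 1(1) 2(1) block_decomposition_unique[of P k "(a, bar a)" Q P' k' Q']
    unfolding diag_block_decomp_def by simp
  then show ?thesis using 1(2) 2(2) \<open>a' = a\<close> by simp
qed

lemma drop_step_drop_block:
  assumes decomp: "diag_block_decomp T P a k Q" and a: "a \<in> Unb ` {1..n} \<or> a = Bar n"
    and "2 \<le> k \<or> C3_clash a P Q"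
  shows "drop_step n T (drop_block a P Q)"
proof -
  have T: "T = P @ replicate k (a, bar a) @ Q" and "1 \<le> k"
    and notin: "(a, bar a) \<notin> set P" "(a, bar a) \<notin> set Q"
    using decomp unfolding diag_block_decomp_def by auto
  consider (left) P' b where "P = P' @ [(a, b)]"
    | (right) d Q' where "\<not> (P \<noteq> [] \<and> fst (last P) = a)" "Q = (d, bar a) # Q'"
    | (neither) "\<not> C3_clash a P Q" "2 \<le> k"
    using assms(3) unfolding C3_clash_def
    by (metis append_butlast_last_id list.collapse prod.collapse)
  then show ?thesis
  proof cases
    case left
    have "b \<noteq> bar a" using notin(1) left by auto
    moreover have "Q = [] \<or> hd Q \<noteq> (a, bar a)" using notin(2) by (cases Q) auto
    moreover have "drop_block a P Q = P' @ [(a, b)] @ Q"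
      using left by (simp add: drop_block_def C3_clash_def)
    ultimately show ?thesis unfolding drop_step_def using T left a \<open>1 \<le> k\<close> by simp blast
  next
    case right
    have "d \<noteq> a" using notin(2) right by auto
    moreover have "P = [] \<or> last P \<noteq> (a, bar a)" using notin(1) last_in_set by metis
    moreover have "drop_block a P Q = P @ [(d, bar a)] @ Q'"
      using right by (simp add: drop_block_def C3_clash_def)
    ultimately show ?thesis unfolding drop_step_def using T right a \<open>1 \<le> k\<close> by simp blast
  next
    case neither
    have "T = P @ replicate (k - 1 + 1) (a, bar a) @ Q" "1 \<le> k - 1" using T neither by simp_all
    moreover have "P = [] \<or> fst (last P) \<noteq> a" "Q = [] \<or> snd (hd Q) \<noteq> bar a"
      using neither unfolding C3_clash_def by auto
    moreover have "drop_block a P Q = P @ replicate 1 (a, bar a) @ Q"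
      using neither by (simp add: drop_block_def)
    ultimately show ?thesis unfolding drop_step_def using a by blast
  qed
qed

lemma drop_map_eq_drop_block:
  assumes tab: "inTab n s T" and not_B: "\<not> inB n s T"
    and not_all_1: "T \<noteq> replicate s (Unb 1, Bar 1)" and decomp: "diag_block_decomp T P a k Q"
  shows "drop_map n s T = drop_block a P Q"
proof -
  have "valid_letter n a" "\<not> leq n (bar a) a"
    using tab diag_block_decomp_in_set[OF decomp] unfolding inTab_def letters_ok_def C2_iff by force+
  then have a: "a \<in> Unb ` {1..n} \<or> a = Bar n" by (rule diag_letter_valid)
  have "2 \<le> k \<or> C3_clash a P Q"
  proof (rule ccontr)
    assume no_drop: "\<not> ?thesis"
    moreover have "k = 1" using no_drop decomp unfolding diag_block_decomp_def by simp
    ultimately have "drop_block a P Q = T"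
      using decomp unfolding diag_block_decomp_def drop_block_def by simp
    moreover have "length T = s" using tab unfolding inTab_def by simp
    ultimately show False
      using inB_drop_block[OF tab decomp not_all_1] not_B unfolding inB_def by metis
  qed
  then have step: "drop_step n T (drop_block a P Q)" using drop_step_drop_block[OF decomp a] by blast
  have "(THE T'. drop_step n T T') = drop_block a P Q"
    using drop_step_unique[OF tab step] step by blast
  then show ?thesis using not_B not_all_1 unfolding drop_map_def by simp
qed

theorem theorem4p2:
  fixes n s :: nat and T :: tableau
  assumes "n \<ge> 4" and "s \<ge> 1" and "inTab n s T"
  shows "\<exists>k \<le> s. inB n k (drop_map n s T)"
proof (cases "T = replicate s (Unb 1, Bar 1) \<or> inB n s T")
  case True
  moreover have "inB n 0 []"
    unfolding inB_def letters_ok_def C1_def C2_def C3_def C4_def C5_def by simp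
  ultimately show ?thesis unfolding drop_map_def by auto
next
  case False
  then obtain P a k Q where decomp: "diag_block_decomp T P a k Q"
    using diag_block_decomp_exists[OF assms(3)] by blast
  then show ?thesis
    using drop_map_eq_drop_block[OF assms(3) _ _ decomp] inB_drop_block[OF assms(3) decomp] False
    by simp
qed

end
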